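(* Let $A=(a_{ij})$ be an $(n-2)\times n$ integer matrix of rank $n-2$ with columns $a_1,\dots,a_n$ such that some $w\in\mathbb Q^{n-2}$ satisfies $w\cdot a_i=1$ for all $i$, and let $B=(b_{i\ell})$ be an $n\times 2$ integer matrix whose columns form a $\mathbb Z$-basis of $\ker_{\mathbb Z}(A)$. Let $d_B$ be the degree of the toric variety $X=X_B\subset\mathbf P^{n-1}$, $\tilde{\mathcal C}_B$ its dual Chow form and $E_A$ its full discriminant. Then, up to a nonzero constant factor, $$E_A(x_1,\dots,x_n)=(x_1\cdots x_n)^{d_B}\cdot\tilde{\mathcal C}_B\bigl(b_{i\ell}/x_i,\ i=1,\dots,n,\ \ell=1,2\bigr),$$ i.e. $\tilde{\mathcal C}_B$ is evaluated at $y_{i\ell}=b_{i\ell}/x_i$.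
   Context: $X=X_B\subset\mathbf P^{n-1}$ is the (codimension 2) subvariety defined by the toric ideal $I_B\subset k[x_1,\dots,x_n]$ ($k$ of characteristic zero) generated by all binomials $x^{u_+}-x^{u_-}$ with $u=u_+-u_-\in\ker_{\mathbb Z}(A)$; $d_B$ is its degree. With $Y=(y_{i\ell})$ an $n\times2$ matrix of indeterminates, the dual Chow form $\tilde{\mathcal C}_B\in\mathbb Z[y_{i\ell}]$ is the irreducible polynomial (unique up to sign) vanishing exactly when the line $\{(y_{11}+ty_{12}:\cdots:y_{n1}+ty_{n2})\}$ meets $X$; it can be written as a polynomial of degree $d_B$ in the brackets $[\,i\,j\,]=y_{i1}y_{j2}-y_{i2}y_{j1}$. Let $Z=(z_{ij})$ be an $(n-2)\times n$ matrix of indeterminates; for $i<j$ let $Z\langle i,j\rangle$ (resp. $A\langle i,j\rangle$) be the submatrix omitting columns $i,j$ and $B(i,j)$ the submatrix of $B$ of rows $i,j$. The primal Plücker coordinates are $\langle i\,j\rangle=\varepsilon_{ij}\det Z\langle i,j\rangle$, with fixed signs $\varepsilon_{ij}\in\{\pm1\}$ such that $\varepsilon_{ij}\det A\langle i,j\rangle=c\,\det B(i,j)$ for all $i<j$ for some constant $c\neq0$ (the paper fixes this normalization only up to such a global constant). The primal Chow form $\mathcal C_A$ is obtained from $\tilde{\mathcal C}_B$, written in brackets, by replacing each $[\,i\,j\,]$ by $\langle i\,j\rangle$. The full discriminant $E_A$ is the image of $\mathcal C_A$ under $z_{ij}\mapsto a_{ij}x_j$. *)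

theory Defs
  imports Complex_Main
    "HOL-Library.Poly_Mapping"
    "HOL-Library.Product_Lexorder"
    "HOL-Computational_Algebra.Factorial_Ring"
    "Jordan_Normal_Form.Determinant"
    "Jordan_Normal_Form.DL_Rank_Submatrix"
begin

text \<open>An integer polynomial in variables of type 'v: monomials are finitely
  supported exponent maps 'v to nat, a polynomial maps monomials to coefficients.\<close>
type_synonym 'v ipoly = "('v \<Rightarrow>\<^sub>0 nat) \<Rightarrow>\<^sub>0 int"

definition peval :: "'v ipoly \<Rightarrow> ('v \<Rightarrow> complex) \<Rightarrow> complex" where
  "peval p f = (\<Sum>mon\<in>Poly_Mapping.keys p. of_int (Poly_Mapping.lookup p mon) * (\<Prod>v\<in>Poly_Mapping.keys (mon :: 'v \<Rightarrow>\<^sub>0 nat). f v ^ Poly_Mapping.lookup mon v))"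

definition pvars :: "'v ipoly \<Rightarrow> 'v set" where
  "pvars p = \<Union> (Poly_Mapping.keys ` Poly_Mapping.keys p)"

definition homogeneous_of_degree :: "'v ipoly \<Rightarrow> nat \<Rightarrow> bool" where
  "homogeneous_of_degree p d \<longleftrightarrow> (\<forall>mon\<in>Poly_Mapping.keys p. (\<Sum>v\<in>Poly_Mapping.keys (mon :: 'v \<Rightarrow>\<^sub>0 nat). Poly_Mapping.lookup mon v) = d)"

definition kerZ :: "int mat \<Rightarrow> int vec set" where
  "kerZ A = {u. dim_vec u = dim_col A \<and> A *\<^sub>v u = 0\<^sub>v (dim_row A)}"

definition is_Zbasis_of_ker :: "int mat \<Rightarrow> int mat \<Rightarrow> bool" where
  "is_Zbasis_of_ker A B \<longleftrightarrow> dim_row B = dim_col A \<and> dim_col B = 2 \<and>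
     col B 0 \<in> kerZ A \<and> col B 1 \<in> kerZ A \<and>
     (\<forall>u\<in>kerZ A. \<exists>!pq::int\<times>int. u = of_int (fst pq) \<cdot>\<^sub>v col B 0 + of_int (snd pq) \<cdot>\<^sub>v col B 1)"

text \<open>z (coordinates indexed by i < n) is a zero of all binomials
  x^(u+) - x^(u-), u in kerZ A, i.e. of the toric ideal I_B.\<close>
definition toric_zero :: "int mat \<Rightarrow> (nat \<Rightarrow> complex) \<Rightarrow> bool" where
  "toric_zero A z \<longleftrightarrow> (\<forall>u\<in>kerZ A.
     (\<Prod>i<dim_col A. z i ^ nat (max (u $ i) 0)) = (\<Prod>i<dim_col A. z i ^ nat (max (- (u $ i)) 0)))"

text \<open>Points of the projective toric variety X_B in P^(n-1) (over C),
  represented by nonzero affine representatives.\<close>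
definition in_toric_variety :: "int mat \<Rightarrow> (nat \<Rightarrow> complex) \<Rightarrow> bool" where
  "in_toric_variety A z \<longleftrightarrow> (\<exists>i<dim_col A. z i \<noteq> 0) \<and> toric_zero A z"

text \<open>Y is an n x 2 matrix, given as a function of (row i, column l), l in {0,1}.
  The (projective) line spanned by the two columns of Y meets X.\<close>
definition line_meets_toric :: "int mat \<Rightarrow> (nat \<times> nat \<Rightarrow> complex) \<Rightarrow> bool" where
  "line_meets_toric A Y \<longleftrightarrow>
     (\<exists>s t. in_toric_variety A (\<lambda>i. s * Y (i,0) + t * Y (i,1)))"

definition bracket :: "(nat \<times> nat \<Rightarrow> complex) \<Rightarrow> nat \<Rightarrow> nat \<Rightarrow> complex" where
  "bracket Y i j = Y (i,0) * Y (j,1) - Y (i,1) * Y (j,0)"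

text \<open>C is the dual Chow form of X_B: an irreducible integer polynomial in the
  variables y_(i,l), i < n, l in {0,1}, which (for Y of rank 2, so that the line
  is defined) vanishes exactly when the line spanned by the columns of Y meets X.\<close>
definition is_dual_chow_form :: "int mat \<Rightarrow> (nat \<times> nat) ipoly \<Rightarrow> bool" where
  "is_dual_chow_form A C \<longleftrightarrow> irreducible C \<and>
     pvars C \<subseteq> {..<dim_col A} \<times> {0,1} \<and>
     (\<forall>Y. (\<exists>i<dim_col A. \<exists>j<dim_col A. bracket Y i j \<noteq> 0) \<longrightarrow>
          (peval C Y = 0 \<longleftrightarrow> line_meets_toric A Y))"

text \<open>P is an expression of C as a homogeneous polynomial of degree d in the
  brackets [i j], i < j < n (variable (i,j) stands for [i j]).\<close>
definition bracket_representation ::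
    "nat \<Rightarrow> (nat \<times> nat) ipoly \<Rightarrow> (nat \<times> nat) ipoly \<Rightarrow> nat \<Rightarrow> bool" where
  "bracket_representation n C P d \<longleftrightarrow>
     pvars P \<subseteq> {(i,j). i < j \<and> j < n} \<and> homogeneous_of_degree P d \<and>
     (\<forall>Y. peval C Y = peval P (\<lambda>(i,j). bracket Y i j))"

definition omit_cols :: "'a mat \<Rightarrow> nat \<Rightarrow> nat \<Rightarrow> 'a mat" where
  "omit_cols M i j = submatrix M UNIV (- {i,j})"

definition rows_of :: "'a mat \<Rightarrow> nat \<Rightarrow> nat \<Rightarrow> 'a mat" where
  "rows_of M i j = submatrix M {i,j} UNIV"

definition admissible_signs :: "int mat \<Rightarrow> int mat \<Rightarrow> (nat \<Rightarrow> nat \<Rightarrow> int) \<Rightarrow> bool" where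
  "admissible_signs A B eps \<longleftrightarrow>
     (\<forall>i j. i < j \<and> j < dim_col A \<longrightarrow> eps i j \<in> {1, -1}) \<and>
     (\<exists>c::rat. c \<noteq> 0 \<and> (\<forall>i j. i < j \<and> j < dim_col A \<longrightarrow>
        of_int (eps i j * det (omit_cols A i j)) = c * of_int (det (rows_of B i j))))"

definition primal_pluecker :: "(nat \<Rightarrow> nat \<Rightarrow> int) \<Rightarrow> complex mat \<Rightarrow> nat \<times> nat \<Rightarrow> complex" where
  "primal_pluecker eps Z = (\<lambda>(i,j). of_int (eps i j) * det (omit_cols Z i j))"

definition primal_chow_form :: "(nat \<times> nat) ipoly \<Rightarrow> (nat \<Rightarrow> nat \<Rightarrow> int) \<Rightarrow> complex mat \<Rightarrow> complex" where
  "primal_chow_form P eps Z = peval P (primal_pluecker eps Z)"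

definition full_discriminant ::
    "int mat \<Rightarrow> (nat \<times> nat) ipoly \<Rightarrow> (nat \<Rightarrow> nat \<Rightarrow> int) \<Rightarrow> (nat \<Rightarrow> complex) \<Rightarrow> complex" where
  "full_discriminant A P eps x =
     primal_chow_form P eps (mat (dim_row A) (dim_col A) (\<lambda>(k,j). of_int (A $$ (k,j)) * x j))"

end

theory Submission
  imports Defs
begin

text \<open>The coefficient matrix Z of the full discriminant is A diag(x), so its maximal
  minor omitting columns i and j is det A<i,j> times the product of the x k with
  k \<noteq> i, j. By the choice of signs, eps i j det A<i,j> = c det B(i,j), hence every primal
  Pluecker coordinate equals c (x 1 \<cdots> x n) times the bracket [i j] evaluated at
  y (i,l) = b (i,l) / x i. Since the Chow form is a form of degree d in the brackets, the
  claim follows with \<kappa> = c ^ d. The rank and homogeneity conditions on A and the Chow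
  form property of C are only needed for these objects to exist; the identity itself
  uses nothing but the bracket representation and the sign normalisation.\<close>

definition scale_cols :: "'a::times mat \<Rightarrow> (nat \<Rightarrow> 'a) \<Rightarrow> 'a mat" where
  "scale_cols M y = mat (dim_row M) (dim_col M) (\<lambda>(k,t). M $$ (k,t) * y t)"

lemma dim_scale_cols [simp]:
  "dim_row (scale_cols M y) = dim_row M" "dim_col (scale_cols M y) = dim_col M"
  by (simp_all add: scale_cols_def)

lemma det_scale_cols:
  fixes M :: "'a::comm_ring_1 mat"
  assumes M: "M \<in> carrier_mat m m"
  shows "det (scale_cols M y) = det M * (\<Prod>t<m. y t)"
proof -
  have "det (scale_cols M y) =
      (\<Sum>p\<in>{p. p permutes {0..<m}}. signof p * (\<Prod>k=0..<m. M $$ (k, p k) * y (p k)))"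
    using M by (subst det_def'[of _ m]) (auto intro!: sum.cong prod.cong
        simp: scale_cols_def permutes_in_image)
  also have "\<dots> = (\<Sum>p\<in>{p. p permutes {0..<m}}.
      signof p * (\<Prod>k=0..<m. M $$ (k, p k)) * (\<Prod>t<m. y t))"
  proof (rule sum.cong [OF refl])
    fix p assume "p \<in> {p. p permutes {0..<m}}"
    then have "(\<Prod>k=0..<m. y (p k)) = (\<Prod>t=0..<m. y t)"
      by (simp add: permutes_imp_bij prod.reindex_bij_betw)
    then show "signof p * (\<Prod>k=0..<m. M $$ (k, p k) * y (p k)) =
        signof p * (\<Prod>k=0..<m. M $$ (k, p k)) * (\<Prod>t<m. y t)"
      by (simp add: prod.distrib atLeast0LessThan mult.assoc)
  qed
  also have "\<dots> = det M * (\<Prod>t<m. y t)"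
    by (subst det_def'[OF M]) (simp add: sum_distrib_right)
  finally show ?thesis .
qed

lemma submatrix_scale_cols:
  "submatrix (scale_cols M y) UNIV J = scale_cols (submatrix M UNIV J) (y \<circ> pick J)"
  by (rule eq_matI) (auto simp: scale_cols_def submatrix_def dim_submatrix pick_UNIV
      dest: pick_le)

lemma submatrix_map_mat: "submatrix (map_mat f M) I J = map_mat f (submatrix M I J)"
proof (rule eq_matI)
  fix k t
  assume "k < dim_row (map_mat f (submatrix M I J))" "t < dim_col (map_mat f (submatrix M I J))"
  then have "k < card {k. k < dim_row M \<and> k \<in> I}" "t < card {t. t < dim_col M \<and> t \<in> J}"
    by (simp_all add: dim_submatrix)
  then show "submatrix (map_mat f M) I J $$ (k,t) = map_mat f (submatrix M I J) $$ (k,t)"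
    by (simp add: submatrix_index dim_submatrix pick_le)
qed (simp_all add: dim_submatrix)

lemma bij_betw_pick:
  "bij_betw (pick S) {..<card {k. k < n \<and> k \<in> S}} {k. k < n \<and> k \<in> S}"
proof -
  let ?T = "{k. k < n \<and> k \<in> S}"
  have pick_props: "t < card S \<or> infinite S" if "t < card ?T" for t
    using that card_mono [of S ?T] by (cases "finite S") force+
  show ?thesis
  proof (rule bij_betw_imageI)
    show "inj_on (pick S) {..<card ?T}"
      by (rule inj_onI) (metis lessThan_iff pick_props nat_neq_iff pick_mono)
    show "pick S ` {..<card ?T} = ?T"
    proof
      show "pick S ` {..<card ?T} \<subseteq> ?T"
        using pick_le pick_props pick_in_set by blast
      show "?T \<subseteq> pick S ` {..<card ?T}"
      proof
        fix k assume k: "k \<in> ?T"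
        then have "card {a \<in> S. a < k} < card ?T"
          by (intro psubset_card_mono) auto
        moreover have "pick S (card {a \<in> S. a < k}) = k"
          using k pick_card_in_set by blast
        ultimately show "k \<in> pick S ` {..<card ?T}" by force
      qed
    qed
  qed
qed

lemma det_omit_cols_scale_cols:
  fixes M :: "'a::comm_ring_1 mat"
  assumes M: "M \<in> carrier_mat (n - 2) n" and ij: "i < j" "j < n"
  shows "det (omit_cols (scale_cols M y) i j) =
    det (omit_cols M i j) * (\<Prod>k\<in>{..<n} - {i,j}. y k)"
proof -
  let ?S = "- {i,j}"
  have S: "{k. k < n \<and> k \<in> ?S} = {..<n} - {i,j}" by auto
  have card_S: "card ({..<n} - {i,j}) = n - 2"
    using ij by (simp add: card_Diff_subset)
  have "omit_cols M i j \<in> carrier_mat (n - 2) (n - 2)"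
  proof
    show "dim_row (omit_cols M i j) = n - 2"
      using M by (simp add: omit_cols_def dim_submatrix)
    show "dim_col (omit_cols M i j) = n - 2"
      using M card_S unfolding omit_cols_def dim_submatrix(2) carrier_matD(2) [OF M] S by simp
  qed
  then have "det (omit_cols (scale_cols M y) i j) =
      det (omit_cols M i j) * (\<Prod>t<n - 2. y (pick ?S t))"
    unfolding omit_cols_def submatrix_scale_cols by (simp add: det_scale_cols)
  also have "(\<Prod>t<n - 2. y (pick ?S t)) = (\<Prod>k\<in>{..<n} - {i,j}. y k)"
    using prod.reindex_bij_betw [OF bij_betw_pick [of ?S n, unfolded S card_S]] by simp
  finally show ?thesis .
qed

lemma det_2x2:
  "det (mat 2 2 f :: 'a::comm_ring_1 mat) = f (0,0) * f (1,1) - f (0,1) * f (1,0)"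
proof -
  have "det (mat 2 2 f) = (\<Sum>t<2. mat 2 2 f $$ (0,t) * cofactor (mat 2 2 f) 0 t)"
    by (rule laplace_expansion_row) auto
  then show ?thesis
    by (simp add: cofactor_def numeral_2_eq_2 det_single mat_delete_def insert_index_def)
qed

lemma det_rows_of:
  fixes B :: "'a::comm_ring_1 mat"
  assumes "B \<in> carrier_mat n 2" "i < j" "j < n"
  shows "det (rows_of B i j) = B $$ (i,0) * B $$ (j,1) - B $$ (i,1) * B $$ (j,0)"
proof -
  have card_ij: "card {r. r < n \<and> r \<in> {i,j}} = 2"
  proof -
    have "{r. r < n \<and> r \<in> {i,j}} = {i,j}" using assms by auto
    then show ?thesis using assms by simp
  qed
  have pick0: "pick {i,j} 0 = i"
    using assms by (auto intro!: Least_equality)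
  moreover have "pick {i,j} 1 = j"
    using assms pick0 by (auto intro!: Least_equality)
  moreover have "rows_of B i j = mat 2 2 (\<lambda>(r,c). B $$ (pick {i,j} r, c))"
    using assms card_ij by (auto intro!: eq_matI simp: rows_of_def submatrix_def pick_UNIV)
  ultimately show ?thesis by (simp add: det_2x2)
qed

lemma prod_lessThan_remove2:
  fixes x :: "nat \<Rightarrow> 'a::comm_monoid_mult"
  assumes "i < j" "j < n"
  shows "(\<Prod>k<n. x k) = x i * x j * (\<Prod>k\<in>{..<n} - {i,j}. x k)"
proof -
  have "(\<Prod>k<n. x k) = x i * (\<Prod>k\<in>{..<n} - {i}. x k)"
    using assms by (subst prod.remove [of _ i]) auto
  also have "(\<Prod>k\<in>{..<n} - {i}. x k) = x j * (\<Prod>k\<in>{..<n} - {i} - {j}. x k)"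
    using assms by (subst prod.remove [of _ j]) auto
  finally show ?thesis by (simp add: Diff_insert2 [symmetric] mult.assoc)
qed

lemma peval_cong:
  assumes "\<And>v. v \<in> pvars p \<Longrightarrow> f v = g v"
  shows "peval p f = peval p g"
  using assms unfolding peval_def pvars_def
  by (intro sum.cong refl arg_cong2 [where f = "(*)"] prod.cong) (metis UN_I)

lemma peval_scale_homogeneous:
  assumes "homogeneous_of_degree p d"
  shows "peval p (\<lambda>v. a * f v) = a ^ d * peval p f"
  unfolding peval_def sum_distrib_left
proof (rule sum.cong [OF refl])
  fix mon assume "mon \<in> Poly_Mapping.keys p"
  then have "(\<Prod>v\<in>Poly_Mapping.keys mon. a ^ Poly_Mapping.lookup mon v) = a ^ d"
    using assms by (simp add: homogeneous_of_degree_def power_sum [symmetric])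
  then show "of_int (Poly_Mapping.lookup p mon) *
        (\<Prod>v\<in>Poly_Mapping.keys mon. (a * f v) ^ Poly_Mapping.lookup mon v) =
      a ^ d * (of_int (Poly_Mapping.lookup p mon) *
        (\<Prod>v\<in>Poly_Mapping.keys mon. f v ^ Poly_Mapping.lookup mon v))"
    by (simp add: power_mult_distrib prod.distrib)
qed

lemma primal_pluecker_scale_cols:
  fixes A B :: "int mat" and x :: "nat \<Rightarrow> complex"
  assumes A: "A \<in> carrier_mat (n - 2) n" and B: "B \<in> carrier_mat n 2"
    and ij: "i < j" "j < n" and x: "x i \<noteq> 0" "x j \<noteq> 0"
    and sign: "of_int (eps i j * det (omit_cols A i j)) = c * of_int (det (rows_of B i j))"
  shows "primal_pluecker eps (scale_cols (map_mat of_int A) x) (i,j) =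
    of_rat c * (\<Prod>k<n. x k) * bracket (\<lambda>(k,l). of_int (B $$ (k,l)) / x k) i j"
proof -
  let ?Z = "scale_cols (map_mat of_int A) x"
  have "det (omit_cols (map_mat of_int A) i j) = (of_int (det (omit_cols A i j)) :: complex)"
    by (simp add: omit_cols_def submatrix_map_mat)
  then have "primal_pluecker eps ?Z (i,j) =
      of_int (eps i j) * of_int (det (omit_cols A i j)) * (\<Prod>k\<in>{..<n} - {i,j}. x k)"
    using A ij by (simp add: primal_pluecker_def det_omit_cols_scale_cols)
  also have "of_int (eps i j) * (of_int (det (omit_cols A i j)) :: complex) =
      of_rat c * of_int (det (rows_of B i j))"
    using arg_cong [OF sign, of of_rat] by (simp add: of_rat_mult)
  also have "of_rat c * of_int (det (rows_of B i j)) * (\<Prod>k\<in>{..<n} - {i,j}. x k) =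
      of_rat c * (\<Prod>k<n. x k) * bracket (\<lambda>(k,l). of_int (B $$ (k,l)) / x k) i j"
    using B ij x by (simp add: prod_lessThan_remove2 [OF ij] det_rows_of bracket_def field_simps)
  finally show ?thesis .
qed

theorem proposition3p2:
  fixes n :: nat and A B :: "int mat"
    and C P :: "(nat \<times> nat) ipoly" and d :: nat and eps :: "nat \<Rightarrow> nat \<Rightarrow> int"
  assumes A_dim: "A \<in> carrier_mat (n - 2) n"
    and A_rank: "vec_space.rank (n - 2) (map_mat rat_of_int A) = n - 2"
    and A_hom: "\<exists>w :: rat vec. dim_vec w = n - 2 \<and>
                  (\<forall>i<n. w \<bullet> col (map_mat rat_of_int A) i = 1)"
    and B_basis: "is_Zbasis_of_ker A B"
    and C_chow: "is_dual_chow_form A C"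
    and P_rep: "bracket_representation n C P d"
    and signs: "admissible_signs A B eps"
  shows "\<exists>\<kappa>::complex. \<kappa> \<noteq> 0 \<and>
           (\<forall>x :: nat \<Rightarrow> complex. (\<forall>i<n. x i \<noteq> 0) \<longrightarrow>
              full_discriminant A P eps x =
                \<kappa> * (\<Prod>i<n. x i) ^ d * peval C (\<lambda>(i,l). of_int (B $$ (i,l)) / x i))"
proof -
  have B_dim: "B \<in> carrier_mat n 2"
    using B_basis A_dim by (auto simp: is_Zbasis_of_ker_def)
  obtain c :: rat where "c \<noteq> 0" and sign: "\<And>i j. i < j \<Longrightarrow> j < n \<Longrightarrow>
      of_int (eps i j * det (omit_cols A i j)) = c * of_int (det (rows_of B i j))"
    using signs A_dim by (auto simp: admissible_signs_def)
  have vars: "pvars P \<subseteq> {(i,j). i < j \<and> j < n}" and hom: "homogeneous_of_degree P d"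
    and rep: "\<And>Y. peval C Y = peval P (\<lambda>(i,j). bracket Y i j)"
    using P_rep by (auto simp: bracket_representation_def)
  have "full_discriminant A P eps x =
      (of_rat c * (\<Prod>k<n. x k)) ^ d * peval C (\<lambda>(k,l). of_int (B $$ (k,l)) / x k)"
    if x: "\<forall>i<n. x i \<noteq> 0" for x :: "nat \<Rightarrow> complex"
  proof -
    have "full_discriminant A P eps x =
        primal_chow_form P eps (scale_cols (map_mat of_int A) x)"
      unfolding full_discriminant_def by (rule arg_cong [of _ _ "primal_chow_form P eps"])
        (auto simp: scale_cols_def)
    also have "\<dots> = peval P (\<lambda>v. of_rat c * (\<Prod>k<n. x k) *
        (\<lambda>(i,j). bracket (\<lambda>(k,l). of_int (B $$ (k,l)) / x k) i j) v)"
      unfolding primal_chow_form_def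
      by (rule peval_cong) (use vars x A_dim B_dim sign in
          \<open>auto intro!: primal_pluecker_scale_cols\<close>)
    finally show ?thesis by (simp add: peval_scale_homogeneous [OF hom] rep)
  qed
  with \<open>c \<noteq> 0\<close> show ?thesis
    by (intro exI [of _ "of_rat c ^ d"]) (simp add: power_mult_distrib)
qed

end
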